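(* Let $R\subseteq\{e,c,w\}$. $\mathbf{NACCLL}^-_R$ is strongly conservative over $\mathbf{InFNL}_R$, and $\mathbf{NACCLL}_R$ is strongly conservative over $\mathbf{CyInFNL}_R$: for every set $\mathcal S\cup\{s\}$ of $\mathcal L^0$-sequents (sequents not containing $!$), $\mathcal S\vdash_{\mathbf{NACCLL}^-_R}s\iff\mathcal S\vdash_{\mathbf{InFNL}_R}s$, and $\mathcal S\vdash_{\mathbf{NACCLL}_R}s\iff\mathcal S\vdash_{\mathbf{CyInFNL}_R}s$.
   Context: Formulas: terms over a countably infinite set of variables in $\{\wedge,\vee,\cdot,\backslash,/,!,1,0\}$; $\mathcal L^0$-formulas are those without $!$. Structures: elements of the free unital groupoid $(Fm^\circ,\circ,\varepsilon)$ generated by formulas ($\circ$ non-associative, $\varepsilon$ empty structure and unit). $k$ ranges over structures in the free unital groupoid generated by formulas $!a$ (including $\varepsilon$). A context $u$ is a structure with exactly one hole; $u(x)$ fills it. A sequent is $x\Rightarrow\delta$, $\delta$ a formula or the empty stoup $\epsilon$. $\mathbf{NACILL}^0$: initial sequents $a\Rightarrow a$, $\varepsilon\Rightarrow 1$, $0\Rightarrow\epsilon$; rules (premises / conclusion): (cut) $x\Rightarrow a$, $u(a)\Rightarrow\delta$ / $u(x)\Rightarrow\delta$; $(1\Rightarrow)$ $u(\varepsilon)\Rightarrow\delta$ / $u(1)\Rightarrow\delta$; $(\Rightarrow 0)$ $x\Rightarrow\epsilon$ / $x\Rightarrow 0$; $(\backslash\Rightarrow)$ $x\Rightarrow a$,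 $u(b)\Rightarrow\delta$ / $u(x\circ(a\backslash b))\Rightarrow\delta$; $(\Rightarrow\backslash)$ $a\circ x\Rightarrow b$ / $x\Rightarrow a\backslash b$; $(/\Rightarrow)$ $x\Rightarrow a$, $u(b)\Rightarrow\delta$ / $u((b/a)\circ x)\Rightarrow\delta$; $(\Rightarrow/)$ $x\circ a\Rightarrow b$ / $x\Rightarrow b/a$; $(\cdot\Rightarrow)$ $u(a\circ b)\Rightarrow\delta$ / $u(a\cdot b)\Rightarrow\delta$; $(\Rightarrow\cdot)$ $x\Rightarrow a$, $y\Rightarrow b$ / $x\circ y\Rightarrow a\cdot b$; $(\wedge\Rightarrow)$ $u(a_i)\Rightarrow\delta$ / $u(a_1\wedge a_2)\Rightarrow\delta$; $(\Rightarrow\wedge)$ $x\Rightarrow a$, $x\Rightarrow b$ / $x\Rightarrow a\wedge b$; $(\vee\Rightarrow)$ $u(a)\Rightarrow\delta$, $u(b)\Rightarrow\delta$ / $u(a\vee b)\Rightarrow\delta$; $(\Rightarrow\vee)$ $x\Rightarrow a_i$ / $x\Rightarrow a_1\vee a_2$; $(!\Rightarrow)$ $u(a)\Rightarrow\delta$ / $u(!a)\Rightarrow\delta$; $(\Rightarrow!)$ $k\Rightarrow a$ / $k\Rightarrow !a$; $(kw)$ $u(\varepsilon)\Rightarrow\delta$ / $u(k)\Rightarrow\delta$; $(kc)$ $u(k\circ k)\Rightarrow\delta$ / $u(k)\Rightarrow\delta$; two-directional: $(ke)$ $u(k\circ y)\Rightarrow\delta\leftrightarrow u(y\circ k)\Rightarrow\delta$;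 $(ka1)$ $u((k\circ y)\circ z)\Rightarrow\delta\leftrightarrow u(k\circ(y\circ z))\Rightarrow\delta$; $(ka2)$ $u((x\circ y)\circ k)\Rightarrow\delta\leftrightarrow u(x\circ(y\circ k))\Rightarrow\delta$. $\mathbf{NACCLL}^-$: $\mathbf{NACILL}^0$ plus initial sequents ${\sim}(-a)\Rightarrow a$, $-({\sim}a)\Rightarrow a$, $({\sim}a)/b\Rightarrow a\backslash(-b)$, $a\backslash(-b)\Rightarrow({\sim}a)/b$, where ${\sim}a:=a\backslash 0$, $-a:=0/a$. $\mathbf{NACCLL}$: additionally ${\sim}a\Rightarrow -a$ and $-a\Rightarrow{\sim}a$. $\mathbf{InFNL}$ ($\mathbf{CyInFNL}$): the $!$-free fragment of $\mathbf{NACCLL}^-$ ($\mathbf{NACCLL}$), i.e. only $!$-free formulas and without the rules $(!\Rightarrow),(\Rightarrow!),(kw),(kc),(ke),(ka1),(ka2)$. Structural rules: $(e)$ $u(x\circ y)\Rightarrow\delta$ / $u(y\circ x)\Rightarrow\delta$; $(c)$ $u(x\circ x)\Rightarrow\delta$ / $u(x)\Rightarrow\delta$; $(i)$ $u(\varepsilon)\Rightarrow\delta$ / $u(x)\Rightarrow\delta$; $(o)$ $x\Rightarrow\epsilon$ / $x\Rightarrow a$; $(w)$ means both $(i)$ and $(o)$. Subscript $R$ adds the rules in $R$. $\mathcal S\vdash s$: there is a derivation of $s$ whose leaves are initial sequents or members of $\mathcal S$. *)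

theory Defs
  imports Main
begin

datatype fm =
    Var nat
  | Meet fm fm
  | Join fm fm
  | Prod fm fm
  | LDiv fm fm
  | RDiv fm fm          (* RDiv b a = b / a *)
  | Bang fm
  | One
  | Zero

fun bangfree :: "fm \<Rightarrow> bool" where
  "bangfree (Var n) = True"
| "bangfree (Meet a b) = (bangfree a \<and> bangfree b)"
| "bangfree (Join a b) = (bangfree a \<and> bangfree b)"
| "bangfree (Prod a b) = (bangfree a \<and> bangfree b)"
| "bangfree (LDiv a b) = (bangfree a \<and> bangfree b)"
| "bangfree (RDiv a b) = (bangfree a \<and> bangfree b)"
| "bangfree (Bang a) = False"
| "bangfree One = True"
| "bangfree Zero = True"

(* structures: terms of the free unital groupoid; identified modulo the unit laws
   via the normal form function snorm below *)
datatype st = Fm fm | Comp st st | Emp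

fun snorm :: "st \<Rightarrow> st" where
  "snorm (Fm a) = Fm a"
| "snorm Emp = Emp"
| "snorm (Comp x y) =
     (let x' = snorm x; y' = snorm y in
      if x' = Emp then y' else if y' = Emp then x' else Comp x' y')"

fun st_bangfree :: "st \<Rightarrow> bool" where
  "st_bangfree (Fm a) = bangfree a"
| "st_bangfree Emp = True"
| "st_bangfree (Comp x y) = (st_bangfree x \<and> st_bangfree y)"

fun is_k :: "st \<Rightarrow> bool" where
  "is_k (Fm (Bang a)) = True"
| "is_k (Fm _) = False"
| "is_k Emp = True"
| "is_k (Comp x y) = (is_k x \<and> is_k y)"

datatype ctx = Hole | CL ctx st | CR st ctx

fun fill :: "ctx \<Rightarrow> st \<Rightarrow> st" where
  "fill Hole x = x"
| "fill (CL u y) x = Comp (fill u x) y"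
| "fill (CR y u) x = Comp y (fill u x)"

(* sequent x \<Rightarrow> \<delta>; None is the empty stoup *)
type_synonym seq = "st \<times> fm option"

definition seq_norm :: "seq \<Rightarrow> seq" where
  "seq_norm s = (snorm (fst s), snd s)"

definition L0_seq :: "seq \<Rightarrow> bool" where
  "L0_seq s = (st_bangfree (fst s) \<and> (case snd s of None \<Rightarrow> True | Some a \<Rightarrow> bangfree a))"

definition neg_l :: "fm \<Rightarrow> fm" where
  "neg_l a = LDiv a Zero"

definition neg_r :: "fm \<Rightarrow> fm" where
  "neg_r a = RDiv Zero a"

(* structural rules: e, c, w (w = i and o) *)
datatype sr = SE | SC | SW

(* rl cyc bng R ps c : c follows from premises ps by one rule (or is initial, ps = []).
   cyc: add the cyclicity initial sequents (NACCLL / CyInFNL);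
   bng: include the exponential rules (NACCLL-family) *)
inductive rl :: "bool \<Rightarrow> bool \<Rightarrow> sr set \<Rightarrow> seq list \<Rightarrow> seq \<Rightarrow> bool"
  for cyc :: bool and bng :: bool and R :: "sr set" where
  ax: "rl cyc bng R [] (Fm a, Some a)"
| one_ax: "rl cyc bng R [] (Emp, Some One)"
| zero_ax: "rl cyc bng R [] (Fm Zero, None)"
| inv1: "rl cyc bng R [] (Fm (neg_l (neg_r a)), Some a)"
| inv2: "rl cyc bng R [] (Fm (neg_r (neg_l a)), Some a)"
| inv3: "rl cyc bng R [] (Fm (RDiv (neg_l a) b), Some (LDiv a (neg_r b)))"
| inv4: "rl cyc bng R [] (Fm (LDiv a (neg_r b)), Some (RDiv (neg_l a) b))"
| cy1: "cyc \<Longrightarrow> rl cyc bng R [] (Fm (neg_l a), Some (neg_r a))"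
| cy2: "cyc \<Longrightarrow> rl cyc bng R [] (Fm (neg_r a), Some (neg_l a))"
| cut: "rl cyc bng R [(x, Some a), (fill u (Fm a), d)] (fill u x, d)"
| oneL: "rl cyc bng R [(fill u Emp, d)] (fill u (Fm One), d)"
| zeroR: "rl cyc bng R [(x, None)] (x, Some Zero)"
| ldivL: "rl cyc bng R [(x, Some a), (fill u (Fm b), d)] (fill u (Comp x (Fm (LDiv a b))), d)"
| ldivR: "rl cyc bng R [(Comp (Fm a) x, Some b)] (x, Some (LDiv a b))"
| rdivL: "rl cyc bng R [(x, Some a), (fill u (Fm b), d)] (fill u (Comp (Fm (RDiv b a)) x), d)"
| rdivR: "rl cyc bng R [(Comp x (Fm a), Some b)] (x, Some (RDiv b a))"
| prodL: "rl cyc bng R [(fill u (Comp (Fm a) (Fm b)), d)] (fill u (Fm (Prod a b)), d)"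
| prodR: "rl cyc bng R [(x, Some a), (y, Some b)] (Comp x y, Some (Prod a b))"
| meetL1: "rl cyc bng R [(fill u (Fm a), d)] (fill u (Fm (Meet a b)), d)"
| meetL2: "rl cyc bng R [(fill u (Fm b), d)] (fill u (Fm (Meet a b)), d)"
| meetR: "rl cyc bng R [(x, Some a), (x, Some b)] (x, Some (Meet a b))"
| joinL: "rl cyc bng R [(fill u (Fm a), d), (fill u (Fm b), d)] (fill u (Fm (Join a b)), d)"
| joinR1: "rl cyc bng R [(x, Some a)] (x, Some (Join a b))"
| joinR2: "rl cyc bng R [(x, Some b)] (x, Some (Join a b))"
| bangL: "bng \<Longrightarrow> rl cyc bng R [(fill u (Fm a), d)] (fill u (Fm (Bang a)), d)"
| bangR: "bng \<Longrightarrow> is_k k \<Longrightarrow> rl cyc bng R [(k, Some a)] (k, Some (Bang a))"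
| kw: "bng \<Longrightarrow> is_k k \<Longrightarrow> rl cyc bng R [(fill u Emp, d)] (fill u k, d)"
| kc: "bng \<Longrightarrow> is_k k \<Longrightarrow> rl cyc bng R [(fill u (Comp k k), d)] (fill u k, d)"
| ke1: "bng \<Longrightarrow> is_k k \<Longrightarrow> rl cyc bng R [(fill u (Comp k y), d)] (fill u (Comp y k), d)"
| ke2: "bng \<Longrightarrow> is_k k \<Longrightarrow> rl cyc bng R [(fill u (Comp y k), d)] (fill u (Comp k y), d)"
| ka1a: "bng \<Longrightarrow> is_k k \<Longrightarrow>
     rl cyc bng R [(fill u (Comp (Comp k y) z), d)] (fill u (Comp k (Comp y z)), d)"
| ka1b: "bng \<Longrightarrow> is_k k \<Longrightarrow>
     rl cyc bng R [(fill u (Comp k (Comp y z)), d)] (fill u (Comp (Comp k y) z), d)"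
| ka2a: "bng \<Longrightarrow> is_k k \<Longrightarrow>
     rl cyc bng R [(fill u (Comp (Comp x y) k), d)] (fill u (Comp x (Comp y k)), d)"
| ka2b: "bng \<Longrightarrow> is_k k \<Longrightarrow>
     rl cyc bng R [(fill u (Comp x (Comp y k)), d)] (fill u (Comp (Comp x y) k), d)"
| e: "SE \<in> R \<Longrightarrow> rl cyc bng R [(fill u (Comp x y), d)] (fill u (Comp y x), d)"
| c: "SC \<in> R \<Longrightarrow> rl cyc bng R [(fill u (Comp x x), d)] (fill u x, d)"
| i: "SW \<in> R \<Longrightarrow> rl cyc bng R [(fill u Emp, d)] (fill u x, d)"
| o: "SW \<in> R \<Longrightarrow> rl cyc bng R [(x, None)] (x, Some a)"

(* When bng = False (InFNL / CyInFNL) every sequent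
   occurring in the derivation must be !-free.  Sequents are identified modulo
   the unit laws of the free unital groupoid (rule conv). *)
inductive der :: "bool \<Rightarrow> bool \<Rightarrow> sr set \<Rightarrow> seq set \<Rightarrow> seq \<Rightarrow> bool"
  for cyc :: bool and bng :: bool and R :: "sr set" and S :: "seq set" where
  leaf: "s \<in> S \<Longrightarrow> (bng \<or> L0_seq s) \<Longrightarrow> der cyc bng R S s"
| step: "rl cyc bng R ps s \<Longrightarrow> (\<forall>p\<in>set ps. der cyc bng R S p) \<Longrightarrow> (bng \<or> L0_seq s)
         \<Longrightarrow> der cyc bng R S s"
| conv: "der cyc bng R S s \<Longrightarrow> seq_norm s = seq_norm s' \<Longrightarrow> der cyc bng R S s'"

abbreviation NACCLLm_R where "NACCLLm_R R S s \<equiv> der False True R S s"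
abbreviation InFNL_R where "InFNL_R R S s \<equiv> der False False R S s"
abbreviation NACCLL_R where "NACCLL_R R S s \<equiv> der True True R S s"
abbreviation CyInFNL_R where "CyInFNL_R R S s \<equiv> der True False R S s"

end

theory Submission
  imports Defs
begin

text \<open>
  The proof is semantic.  The Lindenbaum algebra of \<open>InFNL\<^sub>R\<close> relative to \<open>S\<close> (or of
  \<open>CyInFNL\<^sub>R\<close>) is an involutive residuated lattice-ordered groupoid satisfying the structural
  laws in \<open>R\<close>.  Interpreting \<open>!a\<close> as \<open>1\<close> when \<open>1 \<le> a\<close> and as a least element \<open>\<bottom>\<close> otherwise
  makes every rule of \<open>NACCLL\<^sup>-\<^sub>R\<close> sound: each \<open>k\<close>-structure then evaluates to \<open>1\<close> or below \<open>\<bottom>\<close>,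
  and both kinds of values are central and idempotent.  With weakening \<open>0\<close> is already least;
  otherwise a bottom and a top are adjoined to the Lindenbaum algebra.  A !-free sequent derivable
  in \<open>NACCLL\<^sup>-\<^sub>R\<close> from \<open>S\<close> is thus valid under the canonical valuation, i.e. derivable in
  \<open>InFNL\<^sub>R\<close>.
\<close>

section \<open>Structures and the !-free calculus\<close>

lemma st_bangfree_snorm: "st_bangfree (snorm x) = st_bangfree x"
  by (induction x) (auto simp: Let_def)

lemma st_bangfree_fill: "st_bangfree (fill u x) \<Longrightarrow> st_bangfree y \<Longrightarrow> st_bangfree (fill u y)"
  by (induction u) auto

lemma der_L0: "der cyc False R S s \<Longrightarrow> L0_seq s"
proof (induction rule: der.induct)
  case (conv s s')
  then show ?case
    by (metis L0_seq_def prod.inject seq_norm_def st_bangfree_snorm surjective_pairing)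
qed auto

lemma rl_mono_bang: "rl cyc False R ps s \<Longrightarrow> rl cyc True R ps s"
  by (induction rule: rl.induct) (auto intro: rl.intros)

lemma der_mono_bang: "der cyc False R S s \<Longrightarrow> der cyc True R S s"
  by (induction rule: der.induct) (auto intro: der.intros rl_mono_bang)

fun st_fm :: "st \<Rightarrow> fm" where
  "st_fm (Fm a) = a"
| "st_fm Emp = One"
| "st_fm (Comp x y) = Prod (st_fm x) (st_fm y)"

fun stoup_fm :: "fm option \<Rightarrow> fm" where
  "stoup_fm None = Zero"
| "stoup_fm (Some a) = a"

lemma bangfree_st_fm: "st_bangfree x \<Longrightarrow> bangfree (st_fm x)"
  by (induction x) auto

lemma bangfree_stoup_fm: "L0_seq (x, d) \<Longrightarrow> bangfree (stoup_fm d)"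
  by (cases d) (auto simp: L0_seq_def)

fun ctx_comp :: "ctx \<Rightarrow> ctx \<Rightarrow> ctx" where
  "ctx_comp Hole v = v"
| "ctx_comp (CL u y) v = CL (ctx_comp u v) y"
| "ctx_comp (CR y u) v = CR y (ctx_comp u v)"

lemma fill_ctx_comp: "fill (ctx_comp u v) x = fill u (fill v x)"
  by (induction u) auto

context
  fixes cyc :: bool and R :: "sr set" and S :: "seq set"
begin

abbreviation (input) drv :: "seq \<Rightarrow> bool" where
  "drv s \<equiv> der cyc False R S s"

lemma drv_rule: "rl cyc False R ps s \<Longrightarrow> \<forall>p\<in>set ps. drv p \<Longrightarrow> L0_seq s \<Longrightarrow> drv s"
  by (rule der.step) auto

lemma drv_bangfree: "drv (Fm a, Some b) \<Longrightarrow> bangfree a \<and> bangfree b"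
  using der_L0 by (fastforce simp: L0_seq_def)

lemma drv_axiom: "bangfree a \<Longrightarrow> drv (Fm a, Some a)"
  by (rule drv_rule[OF rl.ax]) (auto simp: L0_seq_def)

lemma drv_one: "drv (Emp, Some One)"
  by (rule drv_rule[OF rl.one_ax]) (auto simp: L0_seq_def)

lemma drv_zero: "drv (Fm Zero, None)"
  by (rule drv_rule[OF rl.zero_ax]) (auto simp: L0_seq_def)

lemma drv_cut_ctx:
  "drv (x, Some a) \<Longrightarrow> drv (fill u (Fm a), d) \<Longrightarrow> L0_seq (fill u x, d) \<Longrightarrow> drv (fill u x, d)"
  by (rule drv_rule[OF rl.cut]) auto

lemma drv_cut: "drv (x, Some a) \<Longrightarrow> drv (Fm a, d) \<Longrightarrow> L0_seq (x, d) \<Longrightarrow> drv (x, d)"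
  using drv_cut_ctx[of x a Hole d] by simp

lemma drv_trans: "drv (Fm a, Some b) \<Longrightarrow> drv (Fm b, Some c) \<Longrightarrow> drv (Fm a, Some c)"
  by (rule drv_cut) (use drv_bangfree in \<open>auto simp: L0_seq_def\<close>)

lemma drv_meet_lower1: "bangfree a \<Longrightarrow> bangfree b \<Longrightarrow> drv (Fm (Meet a b), Some a)"
  using drv_rule[OF rl.meetL1[of cyc False R Hole a _ b]] drv_axiom by (auto simp: L0_seq_def)

lemma drv_meet_lower2: "bangfree a \<Longrightarrow> bangfree b \<Longrightarrow> drv (Fm (Meet a b), Some b)"
  using drv_rule[OF rl.meetL2[of cyc False R Hole b _ a]] drv_axiom by (auto simp: L0_seq_def)

lemma drv_meet_greatest:
  "drv (Fm c, Some a) \<Longrightarrow> drv (Fm c, Some b) \<Longrightarrow> drv (Fm c, Some (Meet a b))"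
  by (rule drv_rule[OF rl.meetR]) (use drv_bangfree in \<open>auto simp: L0_seq_def\<close>)

lemma drv_join_upper1: "bangfree a \<Longrightarrow> bangfree b \<Longrightarrow> drv (Fm a, Some (Join a b))"
  using drv_rule[OF rl.joinR1] drv_axiom by (auto simp: L0_seq_def)

lemma drv_join_upper2: "bangfree a \<Longrightarrow> bangfree b \<Longrightarrow> drv (Fm b, Some (Join a b))"
  using drv_rule[OF rl.joinR2] drv_axiom by (auto simp: L0_seq_def)

lemma drv_join_least:
  "drv (Fm a, Some c) \<Longrightarrow> drv (Fm b, Some c) \<Longrightarrow> drv (Fm (Join a b), Some c)"
  using drv_rule[OF rl.joinL[of cyc False R Hole a _ b]] drv_bangfree[of a c] drv_bangfree[of b c]
  by (auto simp: L0_seq_def)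

lemma drv_prodR: "bangfree a \<Longrightarrow> bangfree b \<Longrightarrow> drv (Comp (Fm a) (Fm b), Some (Prod a b))"
  using drv_rule[OF rl.prodR] drv_axiom by (auto simp: L0_seq_def)

lemma drv_prodL: "drv (Comp (Fm a) (Fm b), d) \<Longrightarrow> drv (Fm (Prod a b), d)"
  using drv_rule[OF rl.prodL[of cyc False R Hole a b]] der_L0[of cyc R S "(Comp (Fm a) (Fm b), d)"]
  by (auto simp: L0_seq_def)

lemma drv_prodL_iff:
  "drv (Fm (Prod a b), Some c) \<longleftrightarrow> drv (Comp (Fm a) (Fm b), Some c)"
  using drv_cut[OF drv_prodR] drv_prodL drv_bangfree[of "Prod a b" c]
  by (auto simp: L0_seq_def)

lemma drv_ldiv_residuation:
  assumes "bangfree a"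
  shows "drv (Fm (Prod a b), Some c) \<longleftrightarrow> drv (Fm b, Some (LDiv a c))"
proof
  assume "drv (Fm (Prod a b), Some c)"
  then show "drv (Fm b, Some (LDiv a c))"
    using drv_rule[OF rl.ldivR] drv_prodL_iff drv_bangfree by (fastforce simp: L0_seq_def)
next
  assume b: "drv (Fm b, Some (LDiv a c))"
  then have bf: "bangfree b" "bangfree c" using drv_bangfree[OF b] by auto
  have "drv (Comp (Fm a) (Fm (LDiv a c)), Some c)"
    using drv_rule[OF rl.ldivL[of cyc False R "Fm a" a Hole c]] drv_axiom assms bf
    by (auto simp: L0_seq_def)
  then have "drv (Comp (Fm a) (Fm b), Some c)"
    using drv_cut_ctx[OF b, of "CR (Fm a) Hole"] assms bf by (auto simp: L0_seq_def)
  then show "drv (Fm (Prod a b), Some c)" by (rule drv_prodL)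
qed

lemma drv_rdiv_residuation:
  assumes "bangfree b"
  shows "drv (Fm (Prod a b), Some c) \<longleftrightarrow> drv (Fm a, Some (RDiv c b))"
proof
  assume "drv (Fm (Prod a b), Some c)"
  then show "drv (Fm a, Some (RDiv c b))"
    using drv_rule[OF rl.rdivR] drv_prodL_iff drv_bangfree by (fastforce simp: L0_seq_def)
next
  assume a: "drv (Fm a, Some (RDiv c b))"
  then have bf: "bangfree a" "bangfree c" using drv_bangfree[OF a] by auto
  have "drv (Comp (Fm (RDiv c b)) (Fm b), Some c)"
    using drv_rule[OF rl.rdivL[of cyc False R "Fm b" b Hole c]] drv_axiom assms bf
    by (auto simp: L0_seq_def)
  then have "drv (Comp (Fm a) (Fm b), Some c)"
    using drv_cut_ctx[OF a, of "CL Hole (Fm b)"] assms bf by (auto simp: L0_seq_def)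
  then show "drv (Fm (Prod a b), Some c)" by (rule drv_prodL)
qed

lemma drv_one_prod_le: "bangfree a \<Longrightarrow> drv (Fm (Prod One a), Some a)"
  using drv_rule[OF rl.oneL[of cyc False R "CL Hole (Fm a)"]]
    der.conv[OF drv_axiom, of a "(Comp Emp (Fm a), Some a)"]
  by (auto simp: L0_seq_def seq_norm_def intro: drv_prodL)

lemma drv_prod_one_le: "bangfree a \<Longrightarrow> drv (Fm (Prod a One), Some a)"
  using drv_rule[OF rl.oneL[of cyc False R "CR (Fm a) Hole"]]
    der.conv[OF drv_axiom, of a "(Comp (Fm a) Emp, Some a)"]
  by (auto simp: L0_seq_def seq_norm_def intro: drv_prodL)

lemma drv_le_one_prod: "bangfree a \<Longrightarrow> drv (Fm a, Some (Prod One a))"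
  using der.conv[OF drv_rule[OF rl.prodR[of cyc False R Emp One "Fm a" a]]] drv_one drv_axiom
  by (auto simp: L0_seq_def seq_norm_def)

lemma drv_le_prod_one: "bangfree a \<Longrightarrow> drv (Fm a, Some (Prod a One))"
  using der.conv[OF drv_rule[OF rl.prodR[of cyc False R "Fm a" a Emp One]]] drv_one drv_axiom
  by (auto simp: L0_seq_def seq_norm_def)

lemma drv_initial: "rl cyc False R [] s \<Longrightarrow> L0_seq s \<Longrightarrow> drv s"
  by (rule drv_rule) auto

lemma drv_exchange: "SE \<in> R \<Longrightarrow> bangfree a \<Longrightarrow> bangfree b \<Longrightarrow> drv (Fm (Prod a b), Some (Prod b a))"
  using drv_rule[OF rl.e[of R cyc False Hole "Fm b" "Fm a"]] drv_prodR[of b a]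
  by (auto simp: L0_seq_def intro!: drv_prodL)

lemma drv_contraction: "SC \<in> R \<Longrightarrow> bangfree a \<Longrightarrow> drv (Fm a, Some (Prod a a))"
  using drv_rule[OF rl.c[of R cyc False Hole "Fm a"]] drv_prodR[of a a] by (auto simp: L0_seq_def)

lemma drv_le_one: "SW \<in> R \<Longrightarrow> bangfree a \<Longrightarrow> drv (Fm a, Some One)"
  using drv_rule[OF rl.i[of R cyc False Hole _ "Fm a"]] drv_one by (auto simp: L0_seq_def)

lemma drv_zero_le: "SW \<in> R \<Longrightarrow> bangfree a \<Longrightarrow> drv (Fm Zero, Some a)"
  using drv_rule[OF rl.o[of R cyc False "Fm Zero"]] drv_zero by (auto simp: L0_seq_def)

lemma drv_st_fm: "st_bangfree x \<Longrightarrow> drv (x, Some (st_fm x))"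
proof (induction x)
  case (Comp x y)
  then show ?case
    using drv_rule[OF rl.prodR[of cyc False R x "st_fm x" y "st_fm y"]] bangfree_st_fm
    by (auto simp: L0_seq_def)
qed (simp_all add: drv_axiom drv_one)

lemma drv_fold_st_fm:
  "st_bangfree x \<Longrightarrow> drv (fill u x, d) \<Longrightarrow> drv (fill u (Fm (st_fm x)), d)"
proof (induction x arbitrary: u)
  case Emp
  then show ?case
    using drv_rule[OF rl.oneL[of cyc False R u d]] der_L0[of cyc R S "(fill u Emp, d)"]
      st_bangfree_fill
    by (auto simp: L0_seq_def)
next
  case (Comp x y)
  have "drv (fill (ctx_comp u (CL Hole y)) (Fm (st_fm x)), d)"
    using Comp.IH(1)[of "ctx_comp u (CL Hole y)"] Comp.prems by (simp add: fill_ctx_comp)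
  then have "drv (fill (ctx_comp u (CR (Fm (st_fm x)) Hole)) (Fm (st_fm y)), d)"
    using Comp.IH(2)[of "ctx_comp u (CR (Fm (st_fm x)) Hole)"] Comp.prems by (simp add: fill_ctx_comp)
  then have "drv (fill u (Comp (Fm (st_fm x)) (Fm (st_fm y))), d)"
    by (simp add: fill_ctx_comp)
  then show ?case
    using drv_rule[OF rl.prodL[of cyc False R u "st_fm x" "st_fm y" d]]
      der_L0[of cyc R S "(fill u (Comp (Fm (st_fm x)) (Fm (st_fm y))), d)"]
      st_bangfree_fill bangfree_st_fm Comp.prems
    by (auto simp: L0_seq_def)
qed simp

lemma drv_iff_drv_fm:
  assumes "L0_seq (x, d)"
  shows "drv (x, d) \<longleftrightarrow> drv (Fm (st_fm x), Some (stoup_fm d))"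
proof
  assume xd: "drv (x, d)"
  have "drv (x, Some (stoup_fm d))"
  proof (cases d)
    case None
    then show ?thesis
      using drv_rule[OF rl.zeroR[of cyc False R x]] xd assms by (auto simp: L0_seq_def)
  qed (use xd in simp)
  then show "drv (Fm (st_fm x), Some (stoup_fm d))"
    using drv_fold_st_fm[of x Hole] assms by (simp add: L0_seq_def)
next
  assume fm: "drv (Fm (st_fm x), Some (stoup_fm d))"
  have x: "drv (x, Some (stoup_fm d))"
    using drv_cut[OF drv_st_fm fm] assms bangfree_stoup_fm by (auto simp: L0_seq_def)
  show "drv (x, d)"
  proof (cases d)
    case None
    then show ?thesis using drv_cut[OF x[unfolded None stoup_fm.simps] drv_zero] assms by simp
  qed (use x in simp)
qed

end

section \<open>Algebraic models\<close>

text \<open>Models are only preordered, so that the Lindenbaum algebra can be used without passing to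
  the quotient by interderivability.\<close>

locale involutive_rlg =
  fixes leq :: "'a \<Rightarrow> 'a \<Rightarrow> bool"
    and mt jn ml ld rd :: "'a \<Rightarrow> 'a \<Rightarrow> 'a"
    and on zr :: 'a and cyc :: bool and R :: "sr set"
  assumes leq_refl: "leq x x"
    and leq_trans: "leq x y \<Longrightarrow> leq y z \<Longrightarrow> leq x z"
    and meet_lower1: "leq (mt x y) x"
    and meet_lower2: "leq (mt x y) y"
    and meet_greatest: "leq z x \<Longrightarrow> leq z y \<Longrightarrow> leq z (mt x y)"
    and join_upper1: "leq x (jn x y)"
    and join_upper2: "leq y (jn x y)"
    and join_least: "leq x z \<Longrightarrow> leq y z \<Longrightarrow> leq (jn x y) z"
    and residl: "leq (ml x y) z \<longleftrightarrow> leq y (ld x z)"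
    and residr: "leq (ml x y) z \<longleftrightarrow> leq x (rd z y)"
    and one_mult_leq: "leq (ml on x) x"
    and leq_one_mult: "leq x (ml on x)"
    and mult_one_leq: "leq (ml x on) x"
    and leq_mult_one: "leq x (ml x on)"
    and dneg_lr: "leq (ld (rd zr a) zr) a"
    and dneg_rl: "leq (rd zr (ld a zr)) a"
    and neg_rdiv_ldiv: "leq (rd (ld a zr) b) (ld a (rd zr b))"
    and neg_ldiv_rdiv: "leq (ld a (rd zr b)) (rd (ld a zr) b)"
    and cyclic_lr: "cyc \<Longrightarrow> leq (ld a zr) (rd zr a)"
    and cyclic_rl: "cyc \<Longrightarrow> leq (rd zr a) (ld a zr)"
    and exchange: "SE \<in> R \<Longrightarrow> leq (ml x y) (ml y x)"
    and contraction: "SC \<in> R \<Longrightarrow> leq x (ml x x)"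
begin

lemma mult_mono:
  assumes x: "leq x x'" and y: "leq y y'"
  shows "leq (ml x y) (ml x' y')"
proof -
  have "leq y (ld x' (ml x' y'))" using leq_trans[OF y] residl leq_refl by blast
  then have "leq x' (rd (ml x' y') y)" using residl residr by blast
  then show ?thesis using leq_trans[OF x] residr by blast
qed

lemma one_mult_equiv:
  assumes "leq k on" "leq on k"
  shows "leq (ml k y) y \<and> leq y (ml k y)"
  using leq_trans[OF mult_mono[OF assms(1) leq_refl] one_mult_leq]
    leq_trans[OF leq_one_mult mult_mono[OF assms(2) leq_refl]] by blast

lemma mult_one_equiv:
  assumes "leq k on" "leq on k"
  shows "leq (ml y k) y \<and> leq y (ml y k)"
  using leq_trans[OF mult_mono[OF leq_refl assms(1)] mult_one_leq]
    leq_trans[OF leq_mult_one mult_mono[OF leq_refl assms(2)]] by blast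

end

locale bang_model = involutive_rlg +
  fixes bt :: 'a
  assumes bot_leq: "leq bt x"
    and weakening_one: "SW \<in> R \<Longrightarrow> leq x on"
    and weakening_zero: "SW \<in> R \<Longrightarrow> leq zr x"
begin

lemma mult_bot_left: "leq k bt \<Longrightarrow> leq (ml k y) bt"
  using residr bot_leq leq_trans by blast

lemma mult_bot_right: "leq k bt \<Longrightarrow> leq (ml y k) bt"
  using residl bot_leq leq_trans by blast

fun fm_val :: "(nat \<Rightarrow> 'a) \<Rightarrow> fm \<Rightarrow> 'a" where
  "fm_val V (Var n) = V n"
| "fm_val V (Meet a b) = mt (fm_val V a) (fm_val V b)"
| "fm_val V (Join a b) = jn (fm_val V a) (fm_val V b)"
| "fm_val V (Prod a b) = ml (fm_val V a) (fm_val V b)"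
| "fm_val V (LDiv a b) = ld (fm_val V a) (fm_val V b)"
| "fm_val V (RDiv a b) = rd (fm_val V a) (fm_val V b)"
| "fm_val V (Bang a) = (if leq on (fm_val V a) then on else bt)"
| "fm_val V One = on"
| "fm_val V Zero = zr"

fun st_val :: "(nat \<Rightarrow> 'a) \<Rightarrow> st \<Rightarrow> 'a" where
  "st_val V (Fm a) = fm_val V a"
| "st_val V Emp = on"
| "st_val V (Comp x y) = ml (st_val V x) (st_val V y)"

fun ctx_val :: "(nat \<Rightarrow> 'a) \<Rightarrow> ctx \<Rightarrow> 'a \<Rightarrow> 'a" where
  "ctx_val V Hole e = e"
| "ctx_val V (CL u y) e = ml (ctx_val V u e) (st_val V y)"
| "ctx_val V (CR y u) e = ml (st_val V y) (ctx_val V u e)"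

definition valid :: "(nat \<Rightarrow> 'a) \<Rightarrow> seq \<Rightarrow> bool" where
  "valid V s = leq (st_val V (fst s)) (fm_val V (stoup_fm (snd s)))"

lemma st_val_st_fm: "st_val V x = fm_val V (st_fm x)"
  by (induction x) auto

lemma st_val_fill: "st_val V (fill u x) = ctx_val V u (st_val V x)"
  by (induction u) auto

lemma ctx_val_mono: "leq e e' \<Longrightarrow> leq (ctx_val V u e) (ctx_val V u e')"
  by (induction u) (auto intro: mult_mono leq_refl)

lemma ctx_val_leq: "leq e e' \<Longrightarrow> leq (ctx_val V u e') d \<Longrightarrow> leq (ctx_val V u e) d"
  using ctx_val_mono leq_trans by blast

lemma ctx_val_join:
  "leq (ctx_val V u a) d \<Longrightarrow> leq (ctx_val V u b) d \<Longrightarrow> leq (ctx_val V u (jn a b)) d"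
proof (induction u arbitrary: d)
  case Hole
  then show ?case by (simp add: join_least)
next
  case (CL u y)
  then show ?case using residr by simp
next
  case (CR y u)
  then show ?case using residl by simp
qed

lemma st_val_snorm: "leq (st_val V (snorm x)) (st_val V x) \<and> leq (st_val V x) (st_val V (snorm x))"
proof (induction x)
  case (Comp x y)
  let ?x = "snorm x" and ?y = "snorm y"
  have m: "leq (ml (st_val V ?x) (st_val V ?y)) (ml (st_val V x) (st_val V y))"
    "leq (ml (st_val V x) (st_val V y)) (ml (st_val V ?x) (st_val V ?y))"
    using Comp mult_mono by auto
  consider "?x = Emp" | "?x \<noteq> Emp" "?y = Emp" | "?x \<noteq> Emp" "?y \<noteq> Emp" by blast
  then show ?case
  proof cases
    case 1
    then have e: "st_val V ?x = on" by simp
    have "leq (st_val V ?y) (ml (st_val V x) (st_val V y))"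
      and "leq (ml (st_val V x) (st_val V y)) (st_val V ?y)"
      using leq_trans[OF leq_one_mult m(1)[unfolded e]] leq_trans[OF m(2)[unfolded e] one_mult_leq] .
    with 1 show ?thesis by (simp add: Let_def)
  next
    case 2
    then have e: "st_val V ?y = on" by simp
    have "leq (st_val V ?x) (ml (st_val V x) (st_val V y))"
      and "leq (ml (st_val V x) (st_val V y)) (st_val V ?x)"
      using leq_trans[OF leq_mult_one m(1)[unfolded e]] leq_trans[OF m(2)[unfolded e] mult_one_leq] .
    with 2 show ?thesis by (simp add: Let_def)
  next
    case 3
    then show ?thesis using m by (simp add: Let_def)
  qed
qed (auto simp: leq_refl)

text \<open>Both kinds of values commute and associate with everything and are idempotent up to
  equivalence; this is what makes the rules for \<open>k\<close>-structures sound.\<close>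

lemma k_val_one_or_bot:
  "is_k k \<Longrightarrow> (leq (st_val V k) on \<and> leq on (st_val V k)) \<or> leq (st_val V k) bt"
proof (induction k)
  case (Fm a)
  then show ?case by (cases a) (auto simp: leq_refl)
next
  case (Comp x y)
  let ?x = "st_val V x" and ?y = "st_val V y"
  from Comp consider "leq ?x on" "leq on ?x" "leq ?y on" "leq on ?y" | "leq ?x bt" | "leq ?y bt"
    by auto
  then show ?case
  proof cases
    case 1
    have "leq (ml ?x ?y) on" using leq_trans[OF mult_mono[OF 1(1,3)] one_mult_leq] .
    moreover have "leq on (ml ?x ?y)" using leq_trans[OF leq_one_mult mult_mono[OF 1(2,4)]] .
    ultimately show ?thesis by simp
  qed (simp_all add: mult_bot_left mult_bot_right)
qed (auto simp: leq_refl)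

lemma k_val_cases:
  assumes "is_k k"
  obtains "leq (st_val V k) on" "leq on (st_val V k)" | "leq (st_val V k) bt"
  using k_val_one_or_bot[OF assms] by blast

lemma k_val_leq_one: "is_k k \<Longrightarrow> leq (st_val V k) on"
  by (erule k_val_cases) (auto intro: leq_trans[OF _ bot_leq])

lemma k_val_contraction: "is_k k \<Longrightarrow> leq (st_val V k) (ml (st_val V k) (st_val V k))"
  by (erule k_val_cases) (blast dest: one_mult_equiv, blast intro: leq_trans[OF _ bot_leq])

lemma k_val_exchange:
  assumes "is_k k"
  shows "leq (ml y (st_val V k)) (ml (st_val V k) y) \<and> leq (ml (st_val V k) y) (ml y (st_val V k))"
proof (rule k_val_cases[OF assms, of V])
  assume one: "leq (st_val V k) on" "leq on (st_val V k)"
  note l = one_mult_equiv[OF one, of y] and r = mult_one_equiv[OF one, of y]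
  show ?thesis using leq_trans[OF conjunct1[OF r] conjunct2[OF l]]
      leq_trans[OF conjunct1[OF l] conjunct2[OF r]] by blast
next
  assume "leq (st_val V k) bt"
  then show ?thesis
    using leq_trans[OF mult_bot_right bot_leq] leq_trans[OF mult_bot_left bot_leq] by blast
qed

lemma k_val_assoc_left:
  assumes "is_k k"
  shows "leq (ml (ml (st_val V k) y) z) (ml (st_val V k) (ml y z))
    \<and> leq (ml (st_val V k) (ml y z)) (ml (ml (st_val V k) y) z)"
proof (rule k_val_cases[OF assms, of V])
  assume one: "leq (st_val V k) on" "leq on (st_val V k)"
  note ky = one_mult_equiv[OF one, of y] and kyz = one_mult_equiv[OF one, of "ml y z"]
  have "leq (ml (ml (st_val V k) y) z) (ml y z)" "leq (ml y z) (ml (ml (st_val V k) y) z)"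
    using mult_mono[OF conjunct1[OF ky] leq_refl] mult_mono[OF conjunct2[OF ky] leq_refl] .
  then show ?thesis
    using leq_trans[OF _ conjunct2[OF kyz]] leq_trans[OF conjunct1[OF kyz]] by blast
next
  assume "leq (st_val V k) bt"
  then show ?thesis
    using leq_trans[OF mult_bot_left[OF mult_bot_left] bot_leq] leq_trans[OF mult_bot_left bot_leq]
    by blast
qed

lemma k_val_assoc_right:
  assumes "is_k k"
  shows "leq (ml (ml x y) (st_val V k)) (ml x (ml y (st_val V k)))
    \<and> leq (ml x (ml y (st_val V k))) (ml (ml x y) (st_val V k))"
proof (rule k_val_cases[OF assms, of V])
  assume one: "leq (st_val V k) on" "leq on (st_val V k)"
  note yk = mult_one_equiv[OF one, of y] and xyk = mult_one_equiv[OF one, of "ml x y"]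
  have "leq (ml x (ml y (st_val V k))) (ml x y)" "leq (ml x y) (ml x (ml y (st_val V k)))"
    using mult_mono[OF leq_refl conjunct1[OF yk]] mult_mono[OF leq_refl conjunct2[OF yk]] .
  then show ?thesis
    using leq_trans[OF _ conjunct2[OF xyk]] leq_trans[OF conjunct1[OF xyk]] by blast
next
  assume "leq (st_val V k) bt"
  then show ?thesis
    using leq_trans[OF mult_bot_right[OF mult_bot_right] bot_leq] leq_trans[OF mult_bot_right bot_leq]
    by blast
qed

lemma valid_ctx_rule:
  assumes "\<forall>p\<in>set [(fill u x, d)]. valid V p" and "leq (st_val V y) (st_val V x)"
  shows "valid V (fill u y, d)"
  using assms ctx_val_leq by (simp add: valid_def st_val_fill)

lemma rl_sound: "rl cyc bng R ps s \<Longrightarrow> \<forall>p\<in>set ps. valid V p \<Longrightarrow> valid V s"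
proof (induction rule: rl.induct)
  case (cut x a u d)
  then show ?case using valid_ctx_rule[of u "Fm a" d V x] by (simp add: valid_def)
next
  case (ldivL x a u b d)
  then have "leq (st_val V x) (fm_val V a)" by (simp add: valid_def)
  from leq_trans[OF mult_mono[OF this leq_refl] residl[THEN iffD2, OF leq_refl]]
  have "leq (st_val V (Comp x (Fm (LDiv a b)))) (st_val V (Fm b))" by simp
  with ldivL.prems show ?case by (intro valid_ctx_rule) auto
next
  case (rdivL x a u b d)
  then have "leq (st_val V x) (fm_val V a)" by (simp add: valid_def)
  from leq_trans[OF mult_mono[OF leq_refl this] residr[THEN iffD2, OF leq_refl]]
  have "leq (st_val V (Comp (Fm (RDiv b a)) x)) (st_val V (Fm b))" by simp
  with rdivL.prems show ?case by (intro valid_ctx_rule) auto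
next
  case (ldivR a x b)
  then show ?case using residl by (simp add: valid_def)
next
  case (rdivR x a b)
  then show ?case using residr by (simp add: valid_def)
next
  case (prodR x a y b)
  then show ?case using mult_mono by (simp add: valid_def)
next
  case (meetR x a b)
  then show ?case using meet_greatest by (simp add: valid_def)
next
  case (joinL u a d b)
  then show ?case using ctx_val_join by (simp add: valid_def st_val_fill)
next
  case (joinR1 x a b)
  then show ?case using leq_trans[OF _ join_upper1] by (simp add: valid_def)
next
  case (joinR2 x b a)
  then show ?case using leq_trans[OF _ join_upper2] by (simp add: valid_def)
next
  case (bangR k a)
  then have k: "leq (st_val V k) (fm_val V a)" by (simp add: valid_def)
  have "leq (st_val V k) bt" if "\<not> leq on (fm_val V a)"
    by (rule k_val_cases[OF bangR(2), of V]) (use that leq_trans[OF _ k] in blast)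
  then show ?case using k_val_leq_one[OF bangR(2)] by (simp add: valid_def)
next
  case (o x a)
  then show ?case using leq_trans[OF _ weakening_zero[OF o(1)]] by (simp add: valid_def)
next
  case (oneL u d)
  from oneL.prems show ?case by (rule valid_ctx_rule) (simp add: leq_refl)
next
  case (prodL u a b d)
  from prodL.prems show ?case by (rule valid_ctx_rule) (simp add: leq_refl)
next
  case (meetL1 u a d b)
  from meetL1.prems show ?case by (rule valid_ctx_rule) (simp add: meet_lower1)
next
  case (meetL2 u b d a)
  from meetL2.prems show ?case by (rule valid_ctx_rule) (simp add: meet_lower2)
next
  case (bangL u a d)
  from bangL.prems show ?case by (rule valid_ctx_rule) (simp add: bot_leq)
next
  case (kw k u d)
  from kw.prems show ?case by (rule valid_ctx_rule) (simp add: k_val_leq_one kw.hyps)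
next
  case (kc k u d)
  from kc.prems show ?case by (rule valid_ctx_rule) (simp add: k_val_contraction kc.hyps)
next
  case (ke1 k u y d)
  from ke1.prems show ?case by (rule valid_ctx_rule) (simp add: k_val_exchange ke1.hyps)
next
  case (ke2 k u y d)
  from ke2.prems show ?case by (rule valid_ctx_rule) (simp add: k_val_exchange ke2.hyps)
next
  case (ka1a k u y z d)
  from ka1a.prems show ?case by (rule valid_ctx_rule) (simp add: k_val_assoc_left ka1a.hyps)
next
  case (ka1b k u y z d)
  from ka1b.prems show ?case by (rule valid_ctx_rule) (simp add: k_val_assoc_left ka1b.hyps)
next
  case (ka2a k u x y d)
  from ka2a.prems show ?case by (rule valid_ctx_rule) (simp add: k_val_assoc_right ka2a.hyps)
next
  case (ka2b k u x y d)
  from ka2b.prems show ?case by (rule valid_ctx_rule) (simp add: k_val_assoc_right ka2b.hyps)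
next
  case (e u x y d)
  from e.prems show ?case by (rule valid_ctx_rule) (simp add: exchange e.hyps)
next
  case (c u x d)
  from c.prems show ?case by (rule valid_ctx_rule) (simp add: contraction c.hyps)
next
  case (i u d x)
  from i.prems show ?case by (rule valid_ctx_rule) (simp add: weakening_one i.hyps)
qed (simp_all add: valid_def neg_l_def neg_r_def leq_refl dneg_lr dneg_rl neg_rdiv_ldiv
    neg_ldiv_rdiv cyclic_lr cyclic_rl)

lemma der_sound: "der cyc bng R S s \<Longrightarrow> \<forall>t\<in>S. valid V t \<Longrightarrow> valid V s"
proof (induction rule: der.induct)
  case (step ps s)
  then show ?case using rl_sound by blast
next
  case (conv s s')
  obtain x d x' d' where s: "s = (x, d)" and s': "s' = (x', d')" by fastforce
  with conv.hyps(2) have x: "snorm x = snorm x'" and d: "d = d'" by (auto simp: seq_norm_def)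
  have "leq (st_val V x') (st_val V (snorm x))" using st_val_snorm[of V x'] x by simp
  then have x'x: "leq (st_val V x') (st_val V x)" using st_val_snorm[of V x] leq_trans by blast
  have "valid V s" using conv.IH conv.prems .
  then show ?case using leq_trans[OF x'x] s s' d by (simp add: valid_def)
qed auto

lemma der_conservative:
  assumes val_emb: "\<And>a. bangfree a \<Longrightarrow> fm_val V a = emb a"
    and leq_emb: "\<And>a b. bangfree a \<Longrightarrow> bangfree b \<Longrightarrow>
      leq (emb a) (emb b) \<longleftrightarrow> der cyc False R S (Fm a, Some b)"
    and S: "\<forall>t\<in>S. L0_seq t" and s: "L0_seq s" and der_s: "der cyc True R S s"
  shows "der cyc False R S s"
proof -
  have valid_iff: "valid V t \<longleftrightarrow> der cyc False R S t" if t: "L0_seq t" for t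
  proof -
    obtain x d where t_eq: "t = (x, d)" by fastforce
    have bf: "bangfree (st_fm x)" "bangfree (stoup_fm d)"
      using t t_eq bangfree_st_fm bangfree_stoup_fm by (auto simp: L0_seq_def)
    have "valid V t \<longleftrightarrow> leq (fm_val V (st_fm x)) (fm_val V (stoup_fm d))"
      by (simp add: valid_def st_val_st_fm t_eq)
    also have "\<dots> \<longleftrightarrow> der cyc False R S (Fm (st_fm x), Some (stoup_fm d))"
      using bf by (simp add: val_emb leq_emb)
    also have "\<dots> \<longleftrightarrow> der cyc False R S t"
      using drv_iff_drv_fm t t_eq by simp
    finally show ?thesis .
  qed
  have "\<forall>t\<in>S. valid V t" using S valid_iff der.leaf by blast
  with der_sound[OF der_s] have "valid V s" .
  with valid_iff s show ?thesis by blast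
qed

end

section \<open>The canonical models\<close>

fun erase_bang :: "fm \<Rightarrow> fm" where
  "erase_bang (Var n) = Var n"
| "erase_bang (Meet a b) = Meet (erase_bang a) (erase_bang b)"
| "erase_bang (Join a b) = Join (erase_bang a) (erase_bang b)"
| "erase_bang (Prod a b) = Prod (erase_bang a) (erase_bang b)"
| "erase_bang (LDiv a b) = LDiv (erase_bang a) (erase_bang b)"
| "erase_bang (RDiv a b) = RDiv (erase_bang a) (erase_bang b)"
| "erase_bang (Bang a) = One"
| "erase_bang One = One"
| "erase_bang Zero = Zero"

lemma bangfree_erase_bang [simp]: "bangfree (erase_bang a)"
  by (induction a) auto

lemma erase_bang_id: "bangfree a \<Longrightarrow> erase_bang a = a"
  by (induction a) auto

text \<open>Erasing \<open>!\<close> only serves to make the carrier of the Lindenbaum algebra the whole type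
  \<open>fm\<close>.\<close>

definition lind_leq :: "bool \<Rightarrow> sr set \<Rightarrow> seq set \<Rightarrow> fm \<Rightarrow> fm \<Rightarrow> bool" where
  "lind_leq cyc R S a b = der cyc False R S (Fm (erase_bang a), Some (erase_bang b))"

lemma lind_leq_iff_der:
  "bangfree a \<Longrightarrow> bangfree b \<Longrightarrow> lind_leq cyc R S a b \<longleftrightarrow> der cyc False R S (Fm a, Some b)"
  by (simp add: lind_leq_def erase_bang_id)

lemma lind_involutive_rlg: "involutive_rlg (lind_leq cyc R S) Meet Join Prod LDiv RDiv One Zero cyc R"
proof unfold_locales
  show "lind_leq cyc R S (LDiv (RDiv Zero a) Zero) a"
    and "lind_leq cyc R S (RDiv Zero (LDiv a Zero)) a"
    and "lind_leq cyc R S (RDiv (LDiv a Zero) b) (LDiv a (RDiv Zero b))"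
    and "lind_leq cyc R S (LDiv a (RDiv Zero b)) (RDiv (LDiv a Zero) b)" for a b
    unfolding lind_leq_def erase_bang.simps
    by (auto intro!: drv_initial[OF rl.inv1[unfolded neg_l_def neg_r_def]]
        drv_initial[OF rl.inv2[unfolded neg_l_def neg_r_def]]
        drv_initial[OF rl.inv3[unfolded neg_l_def neg_r_def]]
        drv_initial[OF rl.inv4[unfolded neg_l_def neg_r_def]]
        simp: L0_seq_def)
  show "lind_leq cyc R S (LDiv a Zero) (RDiv Zero a)"
    and "lind_leq cyc R S (RDiv Zero a) (LDiv a Zero)" if cyc for a
    using drv_initial[OF rl.cy1[OF that, of False R "erase_bang a"]]
      drv_initial[OF rl.cy2[OF that, of False R "erase_bang a"]]
    by (simp_all add: lind_leq_def L0_seq_def neg_l_def neg_r_def)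
  show "lind_leq cyc R S (Prod x y) z \<longleftrightarrow> lind_leq cyc R S y (LDiv x z)" for x y z
    by (simp add: lind_leq_def drv_ldiv_residuation)
  show "lind_leq cyc R S (Prod x y) z \<longleftrightarrow> lind_leq cyc R S x (RDiv z y)" for x y z
    by (simp add: lind_leq_def drv_rdiv_residuation)
qed (auto simp: lind_leq_def drv_axiom drv_meet_lower1 drv_meet_lower2 drv_join_upper1
    drv_join_upper2 drv_one_prod_le drv_le_one_prod
    drv_prod_one_le drv_le_prod_one drv_exchange drv_contraction
    intro: drv_trans drv_meet_greatest drv_join_least)

lemma lind_bang_model:
  "SW \<in> R \<Longrightarrow> bang_model (lind_leq cyc R S) Meet Join Prod LDiv RDiv One Zero cyc R Zero"
  by (intro bang_model.intro lind_involutive_rlg bang_model_axioms.intro)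
    (simp_all add: lind_leq_def drv_le_one drv_zero_le)

text \<open>Without weakening \<open>0\<close> need not be least, so a bottom (the value of \<open>!a\<close> when \<open>1 \<le> a\<close>
  fails) and, to keep the divisions total, a top element are adjoined.\<close>

datatype 'a ext = Bot | Top | El 'a

fun ext_leq :: "('a \<Rightarrow> 'a \<Rightarrow> bool) \<Rightarrow> 'a ext \<Rightarrow> 'a ext \<Rightarrow> bool" where
  "ext_leq le Bot y = True"
| "ext_leq le x Top = True"
| "ext_leq le Top y = False"
| "ext_leq le (El a) Bot = False"
| "ext_leq le (El a) (El b) = le a b"

fun ext_meet :: "('a \<Rightarrow> 'a \<Rightarrow> 'a) \<Rightarrow> 'a ext \<Rightarrow> 'a ext \<Rightarrow> 'a ext" where
  "ext_meet f Bot y = Bot"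
| "ext_meet f x Bot = Bot"
| "ext_meet f Top y = y"
| "ext_meet f x Top = x"
| "ext_meet f (El a) (El b) = El (f a b)"

fun ext_join :: "('a \<Rightarrow> 'a \<Rightarrow> 'a) \<Rightarrow> 'a ext \<Rightarrow> 'a ext \<Rightarrow> 'a ext" where
  "ext_join f Top y = Top"
| "ext_join f x Top = Top"
| "ext_join f Bot y = y"
| "ext_join f x Bot = x"
| "ext_join f (El a) (El b) = El (f a b)"

fun ext_mult :: "('a \<Rightarrow> 'a \<Rightarrow> 'a) \<Rightarrow> 'a ext \<Rightarrow> 'a ext \<Rightarrow> 'a ext" where
  "ext_mult f Bot y = Bot"
| "ext_mult f x Bot = Bot"
| "ext_mult f Top y = Top"
| "ext_mult f x Top = Top"
| "ext_mult f (El a) (El b) = El (f a b)"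

fun ext_ldiv :: "('a \<Rightarrow> 'a \<Rightarrow> 'a) \<Rightarrow> 'a ext \<Rightarrow> 'a ext \<Rightarrow> 'a ext" where
  "ext_ldiv f Bot z = Top"
| "ext_ldiv f Top Top = Top"
| "ext_ldiv f Top z = Bot"
| "ext_ldiv f (El a) Top = Top"
| "ext_ldiv f (El a) Bot = Bot"
| "ext_ldiv f (El a) (El c) = El (f a c)"

fun ext_rdiv :: "('a \<Rightarrow> 'a \<Rightarrow> 'a) \<Rightarrow> 'a ext \<Rightarrow> 'a ext \<Rightarrow> 'a ext" where
  "ext_rdiv f z Bot = Top"
| "ext_rdiv f Top y = Top"
| "ext_rdiv f Bot y = Bot"
| "ext_rdiv f (El c) Top = Bot"
| "ext_rdiv f (El c) (El b) = El (f c b)"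

lemma (in involutive_rlg) ext_bang_model:
  assumes "SW \<notin> R"
  shows "bang_model (ext_leq leq) (ext_meet mt) (ext_join jn) (ext_mult ml) (ext_ldiv ld)
    (ext_rdiv rd) (El on) (El zr) cyc R Bot"
proof unfold_locales
  fix x y z :: "'a ext"
  show "ext_leq leq x x" by (cases x) (auto intro: leq_refl)
  show "ext_leq leq x y \<Longrightarrow> ext_leq leq y z \<Longrightarrow> ext_leq leq x z"
    by (cases x; cases y; cases z) (auto intro: leq_trans)
  show "ext_leq leq (ext_meet mt x y) x" by (cases x; cases y) (auto intro: leq_refl meet_lower1)
  show "ext_leq leq (ext_meet mt x y) y" by (cases x; cases y) (auto intro: leq_refl meet_lower2)
  show "ext_leq leq z x \<Longrightarrow> ext_leq leq z y \<Longrightarrow> ext_leq leq z (ext_meet mt x y)"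
    by (cases x; cases y; cases z) (auto intro: meet_greatest)
  show "ext_leq leq x (ext_join jn x y)" by (cases x; cases y) (auto intro: leq_refl join_upper1)
  show "ext_leq leq y (ext_join jn x y)" by (cases x; cases y) (auto intro: leq_refl join_upper2)
  show "ext_leq leq x z \<Longrightarrow> ext_leq leq y z \<Longrightarrow> ext_leq leq (ext_join jn x y) z"
    by (cases x; cases y; cases z) (auto intro: join_least)
  show "ext_leq leq (ext_mult ml x y) z = ext_leq leq y (ext_ldiv ld x z)"
    by (cases x; cases y; cases z) (auto simp: residl)
  show "ext_leq leq (ext_mult ml x y) z = ext_leq leq x (ext_rdiv rd z y)"
    by (cases x; cases y; cases z) (auto simp: residr)
  show "ext_leq leq (ext_mult ml (El on) x) x" by (cases x) (auto intro: one_mult_leq)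
  show "ext_leq leq x (ext_mult ml (El on) x)" by (cases x) (auto intro: leq_one_mult)
  show "ext_leq leq (ext_mult ml x (El on)) x" by (cases x) (auto intro: mult_one_leq)
  show "ext_leq leq x (ext_mult ml x (El on))" by (cases x) (auto intro: leq_mult_one)
  show "ext_leq leq (ext_ldiv ld (ext_rdiv rd (El zr) x) (El zr)) x"
    by (cases x) (auto intro: dneg_lr)
  show "ext_leq leq (ext_rdiv rd (El zr) (ext_ldiv ld x (El zr))) x"
    by (cases x) (auto intro: dneg_rl)
  show "ext_leq leq (ext_rdiv rd (ext_ldiv ld x (El zr)) y) (ext_ldiv ld x (ext_rdiv rd (El zr) y))"
    by (cases x; cases y) (auto intro: neg_rdiv_ldiv)
  show "ext_leq leq (ext_ldiv ld x (ext_rdiv rd (El zr) y)) (ext_rdiv rd (ext_ldiv ld x (El zr)) y)"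
    by (cases x; cases y) (auto intro: neg_ldiv_rdiv)
  show "cyc \<Longrightarrow> ext_leq leq (ext_ldiv ld x (El zr)) (ext_rdiv rd (El zr) x)"
    by (cases x) (auto intro: cyclic_lr)
  show "cyc \<Longrightarrow> ext_leq leq (ext_rdiv rd (El zr) x) (ext_ldiv ld x (El zr))"
    by (cases x) (auto intro: cyclic_rl)
  show "SE \<in> R \<Longrightarrow> ext_leq leq (ext_mult ml x y) (ext_mult ml y x)"
    by (cases x; cases y) (auto intro: exchange)
  show "SC \<in> R \<Longrightarrow> ext_leq leq x (ext_mult ml x x)"
    by (cases x) (auto intro: contraction)
qed (use assms in auto)

section \<open>Conservativity\<close>

theorem mainTheorem17:
  fixes R :: "sr set" and S :: "seq set" and s :: seq
  assumes "\<forall>t\<in>S. L0_seq t" and "L0_seq s"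
  shows "(NACCLLm_R R S s \<longleftrightarrow> InFNL_R R S s) \<and> (NACCLL_R R S s \<longleftrightarrow> CyInFNL_R R S s)"
proof -
  have "der cyc False R S s" if der_s: "der cyc True R S s" for cyc
  proof (cases "SW \<in> R")
    case True
    then interpret bang_model "lind_leq cyc R S" Meet Join Prod LDiv RDiv One Zero cyc R Zero
      by (rule lind_bang_model)
    have val: "bangfree a \<Longrightarrow> fm_val Var a = a" for a by (induction a) auto
    show ?thesis by (rule der_conservative[OF val lind_leq_iff_der assms der_s])
  next
    case False
    interpret bang_model "ext_leq (lind_leq cyc R S)" "ext_meet Meet" "ext_join Join"
      "ext_mult Prod" "ext_ldiv LDiv" "ext_rdiv RDiv" "El One" "El Zero" cyc R Bot
      by (rule involutive_rlg.ext_bang_model[OF lind_involutive_rlg False])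
    have val: "bangfree a \<Longrightarrow> fm_val (\<lambda>n. El (Var n)) a = El a" for a by (induction a) auto
    have le: "bangfree a \<Longrightarrow> bangfree b \<Longrightarrow>
        ext_leq (lind_leq cyc R S) (El a) (El b) \<longleftrightarrow> der cyc False R S (Fm a, Some b)" for a b
      by (simp add: lind_leq_iff_der)
    show ?thesis by (rule der_conservative[OF val le assms der_s])
  qed
  then show ?thesis using der_mono_bang by blast
qed

end
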